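(* Let $X$ be a locally compact Hausdorff space and $(Y,\Delta)$ an $X$-simplicial complex satisfying hypotheses $(H_1)$ and $(H_2)$. Then every element of $\mathcal S=\bigcup_{\mu\in|\Delta|}S(\mu)$ is relatively compact in $|\Delta|$. Moreover, $|\Delta|$ is locally compact.
   Context: An $X$-simplicial complex is a pair $(Y,\Delta)$ with $Y$ locally compact Hausdorff, $\rho:Y\to X$ a local homeomorphism, and $\Delta$ a family of finite nonempty subsets of $Y$ of bounded cardinality, each contained in a fibre $\rho^{-1}(x)$, closed under taking nonempty subsets. $P(Y)$ is the space of positive Radon measures of total mass $1$ supported in a single fibre of $\rho$, with the weak-$*$ topology from $C_c(Y,\mathbb R)$, and $|\Delta|=\{\mu\in P(Y):\mathrm{supp}(\mu)\in\Delta\}$ with the subspace topology. $(H_1)$: for every compact $K\subseteq Y$, $C_K=\{y\in Y:\exists y'\in K,\{y,y'\}\in\Delta\}$ is compact. $(H_2)$: if nets $(y^{(i)}_\lambda)_\lambda$, $0\le i\le k$, converge to $y^{(i)}$ and $\{y^{(0)}_\lambda,\dots,y^{(k)}_\lambda\}\in\Delta$ for all $\lambda$, then $\{y^{(0)},\dots,y^{(k)}\}\in\Delta$. For $\mu=\sum_{i=0}^mc_i\delta_{y_i}\in|\Delta|$ with $c_i>0$, $S(\mu)$ is the set of all sets $W(\mu,(f_i)_i,\epsilon)=\{\nu\in|\Delta|:|\nu(f_i)-\mu(f_i)|<\epsilon\ \forall i\}$ where $f_0,\dots,f_m\in C_c(Y,[0,1])$ and $\epsilon>0$ satisfy: each $f_i$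 is supported in a relatively compact open neighbourhood $V_i$ of $y_i$ on which $\rho$ restricts to a homeomorphism onto an open subset of $X$, $f_i(y_i)>0$, and $0<\epsilon<\min_i c_if_i(y_i)$. *)

theory Defs
  imports "HOL-Analysis.Analysis"
begin

definition local_homeomorphism :: "'y topology \<Rightarrow> 'x topology \<Rightarrow> ('y \<Rightarrow> 'x) \<Rightarrow> bool" where
  "local_homeomorphism Y X \<rho> \<longleftrightarrow> continuous_map Y X \<rho> \<and>
     (\<forall>y\<in>topspace Y. \<exists>U. openin Y U \<and> y \<in> U \<and> openin X (\<rho> ` U) \<and>
        homeomorphic_map (subtopology Y U) (subtopology X (\<rho> ` U)) \<rho>)"

definition Cc :: "'y topology \<Rightarrow> ('y \<Rightarrow> real) set" where
  "Cc Y = {f. continuous_map Y euclideanreal f \<and>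
              compactin Y (Y closure_of {y \<in> topspace Y. f y \<noteq> 0})}"

definition fsupp :: "'y topology \<Rightarrow> ('y \<Rightarrow> real) \<Rightarrow> 'y set" where
  "fsupp Y f = Y closure_of {y \<in> topspace Y. f y \<noteq> 0}"

definition X_simplicial_complex ::
  "'x topology \<Rightarrow> 'y topology \<Rightarrow> ('y \<Rightarrow> 'x) \<Rightarrow> 'y set set \<Rightarrow> bool" where
  "X_simplicial_complex X Y \<rho> \<Delta> \<longleftrightarrow>
     locally_compact_space Y \<and> Hausdorff_space Y \<and> local_homeomorphism Y X \<rho> \<and>
     (\<forall>s\<in>\<Delta>. finite s \<and> s \<noteq> {} \<and> s \<subseteq> topspace Y \<and>
        (\<exists>x\<in>topspace X. s \<subseteq> {y \<in> topspace Y. \<rho> y = x})) \<and>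
     (\<exists>N::nat. \<forall>s\<in>\<Delta>. card s \<le> N) \<and>
     (\<forall>s\<in>\<Delta>. \<forall>t. t \<subseteq> s \<and> t \<noteq> {} \<longrightarrow> t \<in> \<Delta>)"

definition H1 :: "'y topology \<Rightarrow> 'y set set \<Rightarrow> bool" where
  "H1 Y \<Delta> \<longleftrightarrow> (\<forall>K. compactin Y K \<longrightarrow>
      compactin Y {y \<in> topspace Y. \<exists>y'\<in>K. {y, y'} \<in> \<Delta>})"

text \<open>(H2), with nets rendered as (proper) filters: the nets y^(i) are the coordinate
  functions t \<mapsto> t i on an index filter F over tuples.\<close>
definition H2 :: "'y topology \<Rightarrow> 'y set set \<Rightarrow> bool" where
  "H2 Y \<Delta> \<longleftrightarrow> (\<forall>(k::nat) (F :: (nat \<Rightarrow> 'y) filter) (z :: nat \<Rightarrow> 'y).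
      F \<noteq> bot \<and> (\<forall>i\<le>k. limitin Y (\<lambda>t. t i) (z i) F) \<and>
      eventually (\<lambda>t. t ` {0..k} \<in> \<Delta>) F \<longrightarrow> z ` {0..k} \<in> \<Delta>)"

text \<open>Finitely supported probability measures are represented by their weight function
  mu :: 'y => real (mu = sum of mu y * delta_y).\<close>
definition msupp :: "('y \<Rightarrow> real) \<Rightarrow> 'y set" where
  "msupp \<mu> = {y. \<mu> y \<noteq> 0}"

definition mint :: "('y \<Rightarrow> real) \<Rightarrow> ('y \<Rightarrow> real) \<Rightarrow> real" where
  "mint \<mu> f = (\<Sum>y\<in>msupp \<mu>. \<mu> y * f y)"

definition realization_set :: "'y set set \<Rightarrow> ('y \<Rightarrow> real) set" where
  "realization_set \<Delta> = {\<mu>. (\<forall>y. \<mu> y \<ge> 0) \<and> msupp \<mu> \<in> \<Delta> \<and> finite (msupp \<mu>) \<and>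
                             (\<Sum>y\<in>msupp \<mu>. \<mu> y) = 1}"

text \<open>|Delta| with the weak-* topology induced by C_c(Y,R), i.e. the initial topology
  of the evaluation maps mu \<mapsto> mu(f), f \<in> C_c(Y,R).\<close>
definition realization :: "'y topology \<Rightarrow> 'y set set \<Rightarrow> ('y \<Rightarrow> real) topology" where
  "realization Y \<Delta> = pullback_topology (realization_set \<Delta>)
      (\<lambda>\<mu>. \<lambda>f\<in>Cc Y. mint \<mu> f) (product_topology (\<lambda>_. euclideanreal) (Cc Y))"

text \<open>The basic sets W(mu,(f_i)_i,eps); f y is the function attached to support point y.\<close>
definition W_set :: "'y set set \<Rightarrow> ('y \<Rightarrow> real) \<Rightarrow> ('y \<Rightarrow> 'y \<Rightarrow> real) \<Rightarrow> real \<Rightarrow> ('y \<Rightarrow> real) set" where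
  "W_set \<Delta> \<mu> f \<epsilon> = {\<nu> \<in> realization_set \<Delta>. \<forall>y\<in>msupp \<mu>. \<bar>mint \<nu> (f y) - mint \<mu> (f y)\<bar> < \<epsilon>}"

definition S_family :: "'x topology \<Rightarrow> 'y topology \<Rightarrow> ('y \<Rightarrow> 'x) \<Rightarrow> 'y set set
    \<Rightarrow> ('y \<Rightarrow> real) \<Rightarrow> ('y \<Rightarrow> real) set set" where
  "S_family X Y \<rho> \<Delta> \<mu> = {W_set \<Delta> \<mu> f \<epsilon> | f \<epsilon>.
     (\<forall>y\<in>msupp \<mu>. f y \<in> Cc Y \<and> (\<forall>z. f y z \<in> {0..1}) \<and> f y y > 0 \<and>
        (\<exists>V. openin Y V \<and> y \<in> V \<and> compactin Y (Y closure_of V) \<and>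
             openin X (\<rho> ` V) \<and> homeomorphic_map (subtopology Y V) (subtopology X (\<rho> ` V)) \<rho> \<and>
             fsupp Y (f y) \<subseteq> V)) \<and>
     0 < \<epsilon> \<and> (\<forall>y\<in>msupp \<mu>. \<epsilon> < \<mu> y * f y y)}"

end

(* Let k + 1 bound the size of the simplices. The map (y, c) \<mapsto> \<Sum>i\<le>k. c i \<delta>(y i) is continuous
   from Y^(k+1) \<times> \<real>^(k+1) to |\<Delta>|. Restricted to the tuples in a compact C spanning a
   simplex, a closed set by (H2), times the standard simplex of weights, its domain is compact;
   since points may repeat in a tuple, its image is the set of all measures supported in C.
   If g \<in> C_c(Y) and a > 0, every \<nu> with \<nu>(g) \<ge> a has a support point in supp g, so by (H1)
   its whole support lies in the compact set C_(supp g); hence {\<nu>. a \<le> \<nu>(g)} is compact.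
   Every W \<in> S(\<mu>) lies in such a set (take g = f_y for a support point y of \<mu>), and for g a
   bump function at a support point of \<mu> these sets are compact neighbourhoods of \<mu>. *)

theory Submission
  imports Defs
begin

definition dirac_sum :: "nat \<Rightarrow> (nat \<Rightarrow> 'y) \<Rightarrow> (nat \<Rightarrow> real) \<Rightarrow> 'y \<Rightarrow> real" where
  "dirac_sum k y c = (\<lambda>z. \<Sum>i\<le>k. if y i = z then c i else 0)"

lemma msupp_dirac_sum: "msupp (dirac_sum k y c) \<subseteq> y ` {..k}"
proof
  fix z assume "z \<in> msupp (dirac_sum k y c)"
  then have "(\<Sum>i\<le>k. if y i = z then c i else 0) \<noteq> 0"
    by (simp add: msupp_def dirac_sum_def)
  then have "\<exists>i\<le>k. y i = z"
  proof (rule contrapos_np)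
    assume "\<not> (\<exists>i\<le>k. y i = z)"
    then show "(\<Sum>i\<le>k. if y i = z then c i else 0) = 0"
      by (intro sum.neutral) auto
  qed
  then show "z \<in> y ` {..k}" by blast
qed

lemma mint_dirac_sum: "mint (dirac_sum k y c) f = (\<Sum>i\<le>k. c i * f (y i))"
proof -
  have "mint (dirac_sum k y c) f = (\<Sum>z\<in>y ` {..k}. dirac_sum k y c z * f z)"
    unfolding mint_def using msupp_dirac_sum[of k y c]
    by (intro sum.mono_neutral_left) (auto simp: msupp_def)
  also have "\<dots> = (\<Sum>z\<in>y ` {..k}. \<Sum>i\<le>k. if y i = z then c i * f (y i) else 0)"
    unfolding dirac_sum_def sum_distrib_right by (intro sum.cong refl) auto
  also have "\<dots> = (\<Sum>i\<le>k. \<Sum>z\<in>y ` {..k}. if y i = z then c i * f (y i) else 0)"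
    by (rule sum.swap)
  also have "\<dots> = (\<Sum>i\<le>k. c i * f (y i))"
    by (intro sum.cong refl) (simp add: sum.delta)
  finally show ?thesis .
qed

lemma realization_set_weight_pos:
  assumes "\<mu> \<in> realization_set \<Delta>" and "y \<in> msupp \<mu>"
  shows "0 < \<mu> y"
  using assms by (auto simp: realization_set_def msupp_def order_less_le)

lemma realization_set_weight_le_one:
  assumes "\<mu> \<in> realization_set \<Delta>"
  shows "\<mu> y \<le> 1"
proof (cases "y \<in> msupp \<mu>")
  case True
  then show ?thesis
    using assms member_le_sum[of y "msupp \<mu>" \<mu>] by (simp add: realization_set_def)
next
  case False
  then show ?thesis by (simp add: msupp_def)
qed

lemma realization_set_obtain_msupp:
  assumes "\<mu> \<in> realization_set \<Delta>"
  obtains y where "y \<in> msupp \<mu>"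
  using assms by (fastforce simp: realization_set_def)

lemma mint_ge_point_mass:
  assumes "\<mu> \<in> realization_set \<Delta>" and "y \<in> msupp \<mu>" and "\<forall>z\<in>msupp \<mu>. 0 \<le> g z"
  shows "\<mu> y * g y \<le> mint \<mu> g"
  unfolding mint_def
  using assms by (intro member_le_sum) (auto simp: realization_set_def)

lemma dirac_sum_in_realization_set:
  assumes down: "\<forall>s\<in>\<Delta>. \<forall>t. t \<subseteq> s \<and> t \<noteq> {} \<longrightarrow> t \<in> \<Delta>"
    and y: "y ` {..k} \<in> \<Delta>" and c: "\<forall>i\<le>k. 0 \<le> c i" "(\<Sum>i\<le>k. c i) = 1"
  shows "dirac_sum k y c \<in> realization_set \<Delta>"
proof -
  have total: "(\<Sum>z\<in>msupp (dirac_sum k y c). dirac_sum k y c z) = 1"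
    using mint_dirac_sum[of k y c "\<lambda>_. 1"] c by (simp add: mint_def)
  then have "msupp (dirac_sum k y c) \<noteq> {}" by auto
  then have "msupp (dirac_sum k y c) \<in> \<Delta>"
    using down y msupp_dirac_sum[of k y c] by simp
  moreover have "finite (msupp (dirac_sum k y c))"
    using msupp_dirac_sum[of k y c] by (rule finite_subset) simp
  moreover have "0 \<le> dirac_sum k y c z" for z
    using c by (auto simp: dirac_sum_def intro: sum_nonneg)
  ultimately show ?thesis
    using total by (simp add: realization_set_def)
qed

lemma realization_set_obtain_dirac_sum:
  assumes \<nu>: "\<nu> \<in> realization_set \<Delta>" and card: "card (msupp \<nu>) \<le> Suc k"
  obtains y c where "\<nu> = dirac_sum k y c" "y \<in> {..k} \<rightarrow>\<^sub>E msupp \<nu>" "y ` {..k} = msupp \<nu>"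
    "c \<in> {..k} \<rightarrow>\<^sub>E {0..1}" "(\<Sum>i\<le>k. c i) = 1"
proof -
  define M where "M = msupp \<nu>"
  define m where "m = card M"
  have fin: "finite M" and nonneg: "\<And>z. 0 \<le> \<nu> z" and total: "(\<Sum>z\<in>M. \<nu> z) = 1"
    using \<nu> by (auto simp: realization_set_def M_def)
  then have "M \<noteq> {}" by auto
  then have m: "0 < m" "m \<le> Suc k"
    using fin card by (auto simp: m_def M_def card_gt_0_iff)
  obtain e where e: "bij_betw e {..<m} M"
    using ex_bij_betw_nat_finite[OF fin] by (auto simp: m_def atLeast0LessThan)
  define y where "y = (\<lambda>i\<in>{..k}. if i < m then e i else e 0)"
  define c where "c = (\<lambda>i\<in>{..k}. if i < m then \<nu> (e i) else 0)"
  have e_in: "e i \<in> M" if "i < m" for i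
    using e that bij_betwE by blast
  have sum_c: "(\<Sum>i\<le>k. c i * h i) = (\<Sum>i<m. \<nu> (e i) * h i)" for h :: "nat \<Rightarrow> real"
    by (rule sum.mono_neutral_cong_right) (use m in \<open>auto simp: c_def\<close>)
  show thesis
  proof
    show "\<nu> = dirac_sum k y c"
    proof
      fix z
      have "dirac_sum k y c z = (\<Sum>i\<le>k. c i * (if y i = z then 1 else 0))"
        unfolding dirac_sum_def by (intro sum.cong refl) simp
      also have "\<dots> = (\<Sum>i<m. if e i = z then \<nu> (e i) else 0)"
        unfolding sum_c using m by (intro sum.cong refl) (simp add: y_def)
      also have "\<dots> = (\<Sum>w\<in>M. if w = z then \<nu> w else 0)"
        by (rule sum.reindex_bij_betw[OF e])
      also have "\<dots> = \<nu> z"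
        using fin by (simp add: sum.delta M_def msupp_def)
      finally show "\<nu> z = dirac_sum k y c z" ..
    qed
    show "y \<in> {..k} \<rightarrow>\<^sub>E msupp \<nu>"
      using e_in m by (auto simp: y_def M_def)
    have "e ` {..<m} \<subseteq> y ` {..k}"
      using m by (force simp: y_def)
    then show "y ` {..k} = msupp \<nu>"
      using bij_betw_imp_surj_on[OF e] e_in m by (auto simp: y_def M_def)
    show "c \<in> {..k} \<rightarrow>\<^sub>E {0..1}"
      using nonneg realization_set_weight_le_one[OF \<nu>] by (auto simp: c_def)
    show "(\<Sum>i\<le>k. c i) = 1"
      using sum_c[of "\<lambda>_. 1"] sum.reindex_bij_betw[OF e, of \<nu>] total by simp
  qed
qed

lemma topspace_realization [simp]: "topspace (realization Y \<Delta>) = realization_set \<Delta>"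
  unfolding realization_def topspace_pullback_topology by auto

lemma continuous_map_realization_mint:
  assumes "g \<in> Cc Y"
  shows "continuous_map (realization Y \<Delta>) euclideanreal (\<lambda>\<nu>. mint \<nu> g)"
proof -
  have "continuous_map (realization Y \<Delta>) euclideanreal ((\<lambda>x. x g) \<circ> (\<lambda>\<mu>. \<lambda>f\<in>Cc Y. mint \<mu> f))"
    unfolding realization_def
    by (intro continuous_map_pullback continuous_map_product_projection assms)
  then show ?thesis
    using assms by (simp add: o_def)
qed

lemma closedin_realization_mint_ge:
  assumes "g \<in> Cc Y"
  shows "closedin (realization Y \<Delta>) {\<nu> \<in> realization_set \<Delta>. a \<le> mint \<nu> g}"
  using closedin_continuous_map_preimage[OF continuous_map_realization_mint[OF assms], of "{a..}"]
  by simp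

lemma continuous_map_into_realization:
  assumes "h \<in> topspace T \<rightarrow> realization_set \<Delta>"
    and "\<And>g. g \<in> Cc Y \<Longrightarrow> continuous_map T euclideanreal (\<lambda>t. mint (h t) g)"
  shows "continuous_map T (realization Y \<Delta>) h"
  unfolding realization_def
proof (rule continuous_map_pullback')
  show "topspace T \<subseteq> h -` realization_set \<Delta>"
    using assms(1) by auto
  show "continuous_map T (product_topology (\<lambda>_. euclideanreal) (Cc Y)) ((\<lambda>\<mu>. \<lambda>f\<in>Cc Y. mint \<mu> f) \<circ> h)"
    using assms(2) by (auto simp: continuous_map_componentwise)
qed

lemma closedin_simplex_tuples:
  fixes k :: nat
  assumes "H2 Y \<Delta>"
  shows "closedin (product_topology (\<lambda>_. Y) {..k})
           {y \<in> topspace (product_topology (\<lambda>_. Y) {..k}). y ` {..k} \<in> \<Delta>}"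
    (is "closedin ?P ?S")
  unfolding closedin_contains_derived_set
proof (intro conjI subsetI)
  fix t assume t: "t \<in> ?P derived_set_of ?S"
  then have t_top: "t \<in> topspace ?P"
    by (rule subsetD[OF derived_set_of_subset_topspace])
  define F where "F = atin_within ?P t ?S"
  have "F \<noteq> bot"
    using t by (simp add: F_def derived_set_of_trivial_limit)
  moreover have "limitin ?P (\<lambda>x. x) t F"
    unfolding limitin_def F_def eventually_atin_within using t_top by blast
  then have "\<forall>i\<le>k. limitin Y (\<lambda>x. x i) (t i) F"
    by (simp add: limitin_componentwise)
  moreover have "eventually (\<lambda>x. x ` {0..k} \<in> \<Delta>) F"
    unfolding F_def eventually_atin_within using t_top openin_topspace[of ?P]
    by (intro disjI2 exI[of _ "topspace ?P"]) (simp add: atLeast0AtMost)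
  ultimately have "t ` {0..k} \<in> \<Delta>"
    using assms[unfolded H2_def, rule_format, where k=k and F=F and z=t] by blast
  then show "t \<in> ?S"
    using t_top by (simp add: atLeast0AtMost)
qed simp

lemma compactin_standard_simplex:
  assumes "finite I"
  shows "compactin (product_topology (\<lambda>_. euclideanreal) I) {c \<in> I \<rightarrow>\<^sub>E {0..1}. sum c I = 1}"
proof -
  let ?R = "product_topology (\<lambda>_. euclideanreal) I"
  have "continuous_map ?R euclideanreal (\<lambda>c. sum c I)"
    using assms by (intro continuous_map_sum continuous_map_product_projection) auto
  then have "closedin ?R {c \<in> topspace ?R. sum c I = 1}"
    using closedin_continuous_map_preimage[of ?R euclideanreal _ "{1}"] by simp
  then have "compactin ?R ((I \<rightarrow>\<^sub>E {0..1}) \<inter> {c \<in> topspace ?R. sum c I = 1})"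
    by (intro compact_Int_closedin) (simp add: compactin_PiE)
  moreover have "(I \<rightarrow>\<^sub>E {0..1}) \<inter> {c \<in> topspace ?R. sum c I = 1} = {c \<in> I \<rightarrow>\<^sub>E {0..1}. sum c I = 1}"
    by auto
  ultimately show ?thesis by simp
qed

lemma continuous_map_dirac_sum:
  assumes "\<And>y c. (y, c) \<in> S \<Longrightarrow> dirac_sum k y c \<in> realization_set \<Delta>"
  shows "continuous_map
           (subtopology (prod_topology (product_topology (\<lambda>_. Y) {..k})
                                       (product_topology (\<lambda>_. euclideanreal) {..k})) S)
           (realization Y \<Delta>) (\<lambda>(y, c). dirac_sum k y c)"
    (is "continuous_map (subtopology ?P S) _ _")
proof (rule continuous_map_into_realization)
  show "(\<lambda>(y, c). dirac_sum k y c) \<in> topspace (subtopology ?P S) \<rightarrow> realization_set \<Delta>"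
    using assms by auto
  fix g assume "g \<in> Cc Y"
  then have g: "continuous_map Y euclideanreal g"
    by (simp add: Cc_def)
  have "continuous_map ?P euclideanreal (\<lambda>p. \<Sum>i\<le>k. snd p i * g (fst p i))"
  proof -
    have "continuous_map ?P euclideanreal (\<lambda>p. snd p i)" if "i \<le> k" for i
      using continuous_map_compose[OF continuous_map_snd
          continuous_map_product_projection[of i "{..k}" "\<lambda>_. euclideanreal"]] that
      by (simp add: o_def)
    moreover have "continuous_map ?P euclideanreal (\<lambda>p. g (fst p i))" if "i \<le> k" for i
      using continuous_map_compose[OF continuous_map_compose[OF continuous_map_fst
          continuous_map_product_projection[of i "{..k}" "\<lambda>_. Y"]] g] that
      by (simp add: o_def)
    ultimately show ?thesis
      by (intro continuous_map_sum continuous_map_real_mult) auto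
  qed
  then show "continuous_map (subtopology ?P S) euclideanreal (\<lambda>p. mint ((\<lambda>(y, c). dirac_sum k y c) p) g)"
    using continuous_map_from_subtopology by (simp add: mint_dirac_sum case_prod_beta)
qed

lemma compactin_simplex_tuples:
  fixes k :: nat
  assumes "H2 Y \<Delta>" and C: "compactin Y C"
  shows "compactin (product_topology (\<lambda>_. Y) {..k}) {y \<in> {..k} \<rightarrow>\<^sub>E C. y ` {..k} \<in> \<Delta>}"
proof -
  have "compactin (product_topology (\<lambda>_. Y) {..k})
          (({..k} \<rightarrow>\<^sub>E C) \<inter> {y \<in> topspace (product_topology (\<lambda>_. Y) {..k}). y ` {..k} \<in> \<Delta>})"
    using assms by (intro compact_Int_closedin closedin_simplex_tuples) (simp_all add: compactin_PiE)
  moreover have "({..k} \<rightarrow>\<^sub>E C) \<inter> {y \<in> topspace (product_topology (\<lambda>_. Y) {..k}). y ` {..k} \<in> \<Delta>} =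
                 {y \<in> {..k} \<rightarrow>\<^sub>E C. y ` {..k} \<in> \<Delta>}"
    using compactin_subset_topspace[OF C] by auto
  ultimately show ?thesis
    by simp
qed

lemma realization_supported_eq_dirac_sum_image:
  assumes card: "\<forall>s\<in>\<Delta>. card s \<le> Suc k"
    and down: "\<forall>s\<in>\<Delta>. \<forall>t. t \<subseteq> s \<and> t \<noteq> {} \<longrightarrow> t \<in> \<Delta>"
  shows "{\<nu> \<in> realization_set \<Delta>. msupp \<nu> \<subseteq> C} =
         (\<lambda>(y, c). dirac_sum k y c) `
           ({y \<in> {..k} \<rightarrow>\<^sub>E C. y ` {..k} \<in> \<Delta>} \<times> {c \<in> {..k} \<rightarrow>\<^sub>E {0..1}. sum c {..k} = 1})"
    (is "_ = _ ` (?A \<times> ?B)")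
proof
  have "dirac_sum k y c \<in> {\<nu> \<in> realization_set \<Delta>. msupp \<nu> \<subseteq> C}" if "y \<in> ?A" "c \<in> ?B" for y c
    using that msupp_dirac_sum[of k y c] dirac_sum_in_realization_set[OF down, of y k c]
    by (auto simp: PiE_iff)
  then show "(\<lambda>(y, c). dirac_sum k y c) ` (?A \<times> ?B) \<subseteq> {\<nu> \<in> realization_set \<Delta>. msupp \<nu> \<subseteq> C}"
    by auto
  show "{\<nu> \<in> realization_set \<Delta>. msupp \<nu> \<subseteq> C} \<subseteq> (\<lambda>(y, c). dirac_sum k y c) ` (?A \<times> ?B)"
  proof clarify
    fix \<nu> assume \<nu>: "\<nu> \<in> realization_set \<Delta>" "msupp \<nu> \<subseteq> C"
    then have "card (msupp \<nu>) \<le> Suc k"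
      using card by (simp add: realization_set_def)
    then obtain y c where "\<nu> = dirac_sum k y c" "y \<in> {..k} \<rightarrow>\<^sub>E msupp \<nu>"
      "y ` {..k} = msupp \<nu>" "c \<in> {..k} \<rightarrow>\<^sub>E {0..1}" "(\<Sum>i\<le>k. c i) = 1"
      using realization_set_obtain_dirac_sum[OF \<nu>(1)] by blast
    moreover have "y \<in> ?A" "c \<in> ?B"
      using calculation \<nu> PiE_mono[of "{..k}" "\<lambda>_. msupp \<nu>" "\<lambda>_. C"]
      by (auto simp: realization_set_def)
    ultimately show "\<nu> \<in> (\<lambda>(y, c). dirac_sum k y c) ` (?A \<times> ?B)"
      by blast
  qed
qed

lemma compactin_realization_supported:
  assumes card: "\<forall>s\<in>\<Delta>. card s \<le> Suc k"
    and down: "\<forall>s\<in>\<Delta>. \<forall>t. t \<subseteq> s \<and> t \<noteq> {} \<longrightarrow> t \<in> \<Delta>"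
    and "H2 Y \<Delta>" and "compactin Y C"
  shows "compactin (realization Y \<Delta>) {\<nu> \<in> realization_set \<Delta>. msupp \<nu> \<subseteq> C}"
proof -
  define A where "A = {y \<in> {..k} \<rightarrow>\<^sub>E C. y ` {..k} \<in> \<Delta>}"
  define B where "B = {c \<in> {..k} \<rightarrow>\<^sub>E {0..1::real}. sum c {..k} = 1}"
  let ?P = "prod_topology (product_topology (\<lambda>_. Y) {..k}) (product_topology (\<lambda>_. euclideanreal) {..k})"
  have "compactin ?P (A \<times> B)"
    using assms(3,4) by (simp add: compactin_Times A_def B_def compactin_simplex_tuples compactin_standard_simplex)
  moreover have "continuous_map (subtopology ?P (A \<times> B)) (realization Y \<Delta>) (\<lambda>(y, c). dirac_sum k y c)"
    by (intro continuous_map_dirac_sum dirac_sum_in_realization_set[OF down]) (auto simp: A_def B_def)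
  ultimately have "compactin (realization Y \<Delta>) ((\<lambda>(y, c). dirac_sum k y c) ` (A \<times> B))"
    by (intro image_compactin) (simp_all add: compactin_subtopology)
  then show ?thesis
    using realization_supported_eq_dirac_sum_image[OF card down] by (simp add: A_def B_def)
qed

lemma msupp_subset_adjacent_fsupp:
  assumes sub: "\<forall>s\<in>\<Delta>. s \<subseteq> topspace Y"
    and down: "\<forall>s\<in>\<Delta>. \<forall>t. t \<subseteq> s \<and> t \<noteq> {} \<longrightarrow> t \<in> \<Delta>"
    and \<nu>: "\<nu> \<in> realization_set \<Delta>" and nonzero: "mint \<nu> g \<noteq> 0"
  shows "msupp \<nu> \<subseteq> {y \<in> topspace Y. \<exists>y'\<in>fsupp Y g. {y, y'} \<in> \<Delta>}"
proof
  fix z assume z: "z \<in> msupp \<nu>"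
  have simplex: "msupp \<nu> \<in> \<Delta>"
    using \<nu> by (simp add: realization_set_def)
  have "\<exists>y'\<in>msupp \<nu>. g y' \<noteq> 0"
  proof (rule ccontr)
    assume "\<not> (\<exists>y'\<in>msupp \<nu>. g y' \<noteq> 0)"
    then have "mint \<nu> g = 0"
      unfolding mint_def by (intro sum.neutral) simp
    with nonzero show False ..
  qed
  then obtain y' where y': "y' \<in> msupp \<nu>" "g y' \<noteq> 0" ..
  then have "y' \<in> fsupp Y g"
    using simplex sub closure_of_subset[of "{y \<in> topspace Y. g y \<noteq> 0}" Y]
    by (auto simp: fsupp_def)
  moreover have "{z, y'} \<in> \<Delta>"
    by (rule down[rule_format, OF simplex]) (use z y' in auto)
  moreover have "z \<in> topspace Y"
    using simplex sub z by blast
  ultimately show "z \<in> {y \<in> topspace Y. \<exists>y'\<in>fsupp Y g. {y, y'} \<in> \<Delta>}"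
    by blast
qed

lemma compactin_realization_mint_ge:
  assumes "X_simplicial_complex X Y \<rho> \<Delta>" and "H1 Y \<Delta>" and "H2 Y \<Delta>"
    and g: "g \<in> Cc Y" and "0 < a"
  shows "compactin (realization Y \<Delta>) {\<nu> \<in> realization_set \<Delta>. a \<le> mint \<nu> g}"
proof -
  obtain N where card: "\<forall>s\<in>\<Delta>. card s \<le> N"
    using assms(1) unfolding X_simplicial_complex_def by blast
  have sub: "\<forall>s\<in>\<Delta>. s \<subseteq> topspace Y"
    and down: "\<forall>s\<in>\<Delta>. \<forall>t. t \<subseteq> s \<and> t \<noteq> {} \<longrightarrow> t \<in> \<Delta>"
    using assms(1) unfolding X_simplicial_complex_def by blast+
  define C where "C = {y \<in> topspace Y. \<exists>y'\<in>fsupp Y g. {y, y'} \<in> \<Delta>}"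
  have "compactin Y (fsupp Y g)"
    using g by (simp add: Cc_def fsupp_def)
  then have "compactin Y C"
    using assms(2) by (simp add: H1_def C_def)
  then have "compactin (realization Y \<Delta>) {\<nu> \<in> realization_set \<Delta>. msupp \<nu> \<subseteq> C}"
    using card down assms(3) by (intro compactin_realization_supported[where k=N]) (auto intro: le_SucI)
  moreover have "msupp \<nu> \<subseteq> C" if "\<nu> \<in> realization_set \<Delta>" "a \<le> mint \<nu> g" for \<nu>
    unfolding C_def using that \<open>0 < a\<close> by (intro msupp_subset_adjacent_fsupp[OF sub down]) auto
  then have "{\<nu> \<in> realization_set \<Delta>. a \<le> mint \<nu> g} \<subseteq> {\<nu> \<in> realization_set \<Delta>. msupp \<nu> \<subseteq> C}"
    by blast
  ultimately show ?thesis
    using closed_compactin closedin_realization_mint_ge[OF g] by blast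
qed

lemma S_family_subset_mint_ge:
  assumes \<mu>: "\<mu> \<in> realization_set \<Delta>" and "W \<in> S_family X Y \<rho> \<Delta> \<mu>"
  obtains g a where "g \<in> Cc Y" "0 < a" "W \<subseteq> {\<nu> \<in> realization_set \<Delta>. a \<le> mint \<nu> g}"
proof -
  obtain f \<epsilon> where W: "W = W_set \<Delta> \<mu> f \<epsilon>"
    and f: "\<forall>y\<in>msupp \<mu>. f y \<in> Cc Y \<and> (\<forall>z. f y z \<in> {0..1})"
    and \<epsilon>: "\<forall>y\<in>msupp \<mu>. \<epsilon> < \<mu> y * f y y"
    using assms(2) unfolding S_family_def by blast
  obtain y where y: "y \<in> msupp \<mu>"
    using realization_set_obtain_msupp[OF \<mu>] .
  have "\<mu> y * f y y \<le> mint \<mu> (f y)"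
    using f y by (intro mint_ge_point_mass[OF \<mu> y]) auto
  then have "0 < mint \<mu> (f y) - \<epsilon>"
    using \<epsilon> y by fastforce
  moreover have "W \<subseteq> {\<nu> \<in> realization_set \<Delta>. mint \<mu> (f y) - \<epsilon> \<le> mint \<nu> (f y)}"
    using y by (force simp: W W_set_def)
  ultimately show thesis
    using that f y by blast
qed

lemma compactin_closure_of_S_family:
  assumes "X_simplicial_complex X Y \<rho> \<Delta>" and "H1 Y \<Delta>" and "H2 Y \<Delta>"
    and "\<mu> \<in> realization_set \<Delta>" and "W \<in> S_family X Y \<rho> \<Delta> \<mu>"
  shows "compactin (realization Y \<Delta>) (realization Y \<Delta> closure_of W)"
proof -
  obtain g a where g: "g \<in> Cc Y" and "0 < a"
    and W: "W \<subseteq> {\<nu> \<in> realization_set \<Delta>. a \<le> mint \<nu> g}"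
    using S_family_subset_mint_ge[OF assms(4,5)] .
  then have "realization Y \<Delta> closure_of W \<subseteq> {\<nu> \<in> realization_set \<Delta>. a \<le> mint \<nu> g}"
    by (intro closure_of_minimal closedin_realization_mint_ge)
  with compactin_realization_mint_ge[OF assms(1-3) g \<open>0 < a\<close>] show ?thesis
    by (rule closed_compactin) simp
qed

lemma Cc_bump_function:
  assumes "locally_compact_space Y" and "Hausdorff_space Y" and "y \<in> topspace Y"
  obtains g where "g \<in> Cc Y" "g ` topspace Y \<subseteq> {0..1}" "g y = 1"
proof -
  obtain U K where UK: "openin Y U" "compactin Y K" "y \<in> U" "U \<subseteq> K"
    using assms(1,3) unfolding locally_compact_space_def by blast
  have "completely_regular_space Y"
    using assms(1,2) by (simp add: locally_compact_regular_imp_completely_regular_space)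
  moreover have "compactin Y {y}" "closedin Y (topspace Y - U)" "disjnt {y} (topspace Y - U)"
    using UK assms(3) by auto
  ultimately obtain g where g: "continuous_map Y (top_of_set {0..1::real}) g"
      "g ` (topspace Y - U) \<subseteq> {0}" "g ` {y} \<subseteq> {1}"
    by (rule Urysohn_completely_regular_compact_closed[OF zero_le_one])
  have "{z \<in> topspace Y. g z \<noteq> 0} \<subseteq> K"
    using g(2) UK(4) by blast
  then have "fsupp Y g \<subseteq> K"
    unfolding fsupp_def
    using closure_of_minimal compactin_imp_closedin[OF assms(2) UK(2)] by blast
  then have "compactin Y (fsupp Y g)"
    using closed_compactin[OF UK(2)] by (simp add: fsupp_def)
  moreover have "continuous_map Y euclideanreal g" "g ` topspace Y \<subseteq> {0..1}"
    using g(1) by (auto simp: continuous_map_in_subtopology)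
  ultimately show thesis
    using that g(3) by (auto simp: Cc_def fsupp_def)
qed

lemma locally_compact_realization:
  assumes "X_simplicial_complex X Y \<rho> \<Delta>" and "H1 Y \<Delta>" and "H2 Y \<Delta>"
  shows "locally_compact_space (realization Y \<Delta>)"
  unfolding locally_compact_space_def topspace_realization
proof
  fix \<mu> assume \<mu>: "\<mu> \<in> realization_set \<Delta>"
  have Y: "locally_compact_space Y" "Hausdorff_space Y" and sub: "\<forall>s\<in>\<Delta>. s \<subseteq> topspace Y"
    using assms(1) unfolding X_simplicial_complex_def by blast+
  obtain y where y: "y \<in> msupp \<mu>"
    using realization_set_obtain_msupp[OF \<mu>] .
  have msupp_top: "msupp \<mu> \<subseteq> topspace Y"
    using sub \<mu> by (simp add: realization_set_def)
  obtain g where g: "g \<in> Cc Y" "g ` topspace Y \<subseteq> {0..1}" "g y = 1"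
    using Cc_bump_function[OF Y] y msupp_top by blast
  define a where "a = \<mu> y / 2"
  have "\<forall>z\<in>msupp \<mu>. 0 \<le> g z"
    using g(2) msupp_top by fastforce
  then have "\<mu> y \<le> mint \<mu> g"
    using mint_ge_point_mass[OF \<mu> y, of g] g(3) by simp
  then have "0 < a" "a < mint \<mu> g"
    using realization_set_weight_pos[OF \<mu> y] by (simp_all add: a_def)
  define U where "U = {\<nu> \<in> realization_set \<Delta>. mint \<nu> g \<in> {a<..}}"
  have "openin (realization Y \<Delta>) U"
    unfolding U_def
    using openin_continuous_map_preimage[OF continuous_map_realization_mint[OF g(1)], of "{a<..}"]
    by simp
  moreover have "compactin (realization Y \<Delta>) {\<nu> \<in> realization_set \<Delta>. a \<le> mint \<nu> g}"
    using compactin_realization_mint_ge[OF assms g(1) \<open>0 < a\<close>] .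
  moreover have "\<mu> \<in> U" "U \<subseteq> {\<nu> \<in> realization_set \<Delta>. a \<le> mint \<nu> g}"
    using \<mu> \<open>a < mint \<mu> g\<close> by (auto simp: U_def)
  ultimately show "\<exists>U K. openin (realization Y \<Delta>) U \<and> compactin (realization Y \<Delta>) K \<and> \<mu> \<in> U \<and> U \<subseteq> K"
    by blast
qed

theorem proposition3p19:
  fixes X :: "'x topology" and Y :: "'y topology" and \<rho> :: "'y \<Rightarrow> 'x" and \<Delta> :: "'y set set"
  assumes "locally_compact_space X" and "Hausdorff_space X"
    and "X_simplicial_complex X Y \<rho> \<Delta>"
    and "H1 Y \<Delta>" and "H2 Y \<Delta>"
  shows "(\<forall>\<mu>\<in>realization_set \<Delta>. \<forall>W\<in>S_family X Y \<rho> \<Delta> \<mu>.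
           compactin (realization Y \<Delta>) (realization Y \<Delta> closure_of W)) \<and>
         locally_compact_space (realization Y \<Delta>)"
  using compactin_closure_of_S_family[OF assms(3-5)] locally_compact_realization[OF assms(3-5)]
  by blast

end
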